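(* Let $\Gamma=(Q,A,E,(\delta_e)_{e\in E})$ be an MEMDP, $q\in Q$ a state, $W$ a parity objective, and $b\in\mathcal D(E)$ a prior belief with $\mathrm{Supp}(b)=E$. Then $\mathrm{val}^{\mathrm{uni}}_q(\Gamma,W)=1$ if and only if $\mathrm{val}^{\mathrm{pr}}_q(\Gamma,b,W)=1$. Moreover, for every strategy $\sigma\in\mathrm{Strat}(Q,A)$: $\mathrm{val}^{\mathrm{uni}}_q(\Gamma,\sigma,W)=1$ if and only if $\mathrm{val}^{\mathrm{pr}}_q(\Gamma,b,\sigma,W)=1$.
   Context: For a set $X$, a distribution on $X$ is a function $d:X\to[0,1]$ with countable support $\mathrm{Supp}(d)=\{x: d(x)>0\}$ and $\sum_x d(x)=1$; $\mathcal D(X)$ denotes the set of distributions. An MDP is $G=(Q,A,\delta)$ with $Q,A$ finite non-empty and $\delta:Q\times A\to\mathcal D(Q)$. Finite runs are elements of $Q\cdot(A\cdot Q)^*$, infinite runs elements of $(Q\cdot A)^\omega$. A strategy is a map $\sigma:Q\cdot(A\cdot Q)^*\to\mathcal D(A)$; $\mathrm{Strat}(Q,A)$ is the set of strategies. For $q\in Q$, $\mathbb P^\sigma_q[G,\cdot]$ is the unique probability measure on the Borel sets of infinite runs such that the cylinder of a finite run $q_0(a_1,q_1)\cdots(a_n,q_n)$ has probability $[q_0=q]\prod_{i=1}^n\sigma(q_0(a_1,q_1)\cdots(a_{i-1},q_{i-1}))(a_i)\,\delta(q_{i-1},a_i)(q_i)$; sets of infinite state sequences are measured via projection of runs onto their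 state sequences. A parity objective is given by a labelling $f:Q\to\mathbb N$: $W$ is the set of infinite state sequences whose maximal label occurring infinitely often is even. An MEMDP is $\Gamma=(Q,A,E,(\delta_e)_{e\in E})$ with $E$ a finite non-empty set of environments and each $\Gamma[e]:=(Q,A,\delta_e)$ an MDP. Values: $\mathrm{val}^{\mathrm{uni}}_q(\Gamma,\sigma,W)=\min_{e\in E}\mathbb P^\sigma_q[\Gamma[e],W]$, $\mathrm{val}^{\mathrm{uni}}_q(\Gamma,W)=\sup_\sigma \mathrm{val}^{\mathrm{uni}}_q(\Gamma,\sigma,W)$; for $b\in\mathcal D(E)$, $\mathrm{val}^{\mathrm{pr}}_q(\Gamma,b,\sigma,W)=\sum_{e\in E}b(e)\,\mathbb P^\sigma_q[\Gamma[e],W]$ and $\mathrm{val}^{\mathrm{pr}}_q(\Gamma,b,W)=\sup_\sigma\mathrm{val}^{\mathrm{pr}}_q(\Gamma,b,\sigma,W)$. *)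

theory Defs
  imports "HOL-Probability.Probability"
begin

text \<open>MDPs with finite state type 'q and finite action type 'a (nonempty, as all HOL types).
  A finite run q0 (a1,q1) ... (an,qn) is represented as the pair (q0, [(a1,q1),...,(an,qn)]).
  An infinite run q0 a1 q1 a2 ... in (Q.A)^omega is a stream of pairs (q_i, a_(i+1)).\<close>

type_synonym ('q, 'a) frun = "'q \<times> ('a \<times> 'q) list"
type_synonym ('q, 'a) strat = "('q, 'a) frun \<Rightarrow> 'a pmf"

definition run_states :: "('q, 'a) frun \<Rightarrow> 'q list" where
  "run_states r = fst r # map snd (snd r)"

definition cylinder :: "('q, 'a) frun \<Rightarrow> ('q \<times> 'a) stream set" where
  "cylinder r = {\<omega>. (\<forall>i < length (snd r).
        \<omega> !! i = (run_states r ! i, fst (snd r ! i)))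
     \<and> fst (\<omega> !! length (snd r)) = last (run_states r)}"

definition cyl_prob ::
  "('q \<Rightarrow> 'a \<Rightarrow> 'q pmf) \<Rightarrow> ('q, 'a) strat \<Rightarrow> 'q \<Rightarrow> ('q, 'a) frun \<Rightarrow> real" where
  "cyl_prob \<delta> \<sigma> q r =
     (if fst r = q then 1 else 0) *
     (\<Prod>i<length (snd r).
        pmf (\<sigma> (fst r, take i (snd r))) (fst (snd r ! i)) *
        pmf (\<delta> (run_states r ! i) (fst (snd r ! i))) (snd (snd r ! i)))"

definition run_measure ::
  "('q \<Rightarrow> 'a \<Rightarrow> 'q pmf) \<Rightarrow> ('q, 'a) strat \<Rightarrow> 'q \<Rightarrow> ('q \<times> 'a) stream measure" where
  "run_measure \<delta> \<sigma> q = (THE M.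
     sets M = sets (stream_space (count_space UNIV)) \<and> prob_space M \<and>
     (\<forall>r. measure M (cylinder r) = cyl_prob \<delta> \<sigma> q r))"

definition prob_obj ::
  "('q \<Rightarrow> 'a \<Rightarrow> 'q pmf) \<Rightarrow> ('q, 'a) strat \<Rightarrow> 'q \<Rightarrow> 'q stream set \<Rightarrow> real" where
  "prob_obj \<delta> \<sigma> q W =
     measure (run_measure \<delta> \<sigma> q) {\<omega> \<in> space (run_measure \<delta> \<sigma> q). smap fst \<omega> \<in> W}"

definition parity :: "('q::finite \<Rightarrow> nat) \<Rightarrow> 'q stream set" where
  "parity f = {s. even (Max {n. \<exists>\<^sub>\<infinity> i. f (s !! i) = n})}"

text \<open>MEMDP: environments form a finite type 'e, delta :: 'e => 'q => 'a => 'q pmf.\<close>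
definition val_uni_strat ::
  "('e::finite \<Rightarrow> 'q \<Rightarrow> 'a \<Rightarrow> 'q pmf) \<Rightarrow> 'q \<Rightarrow> ('q, 'a) strat \<Rightarrow> 'q stream set \<Rightarrow> real" where
  "val_uni_strat \<delta> q \<sigma> W = Min (range (\<lambda>e. prob_obj (\<delta> e) \<sigma> q W))"

definition val_uni ::
  "('e::finite \<Rightarrow> 'q \<Rightarrow> 'a \<Rightarrow> 'q pmf) \<Rightarrow> 'q \<Rightarrow> 'q stream set \<Rightarrow> real" where
  "val_uni \<delta> q W = (SUP \<sigma>. val_uni_strat \<delta> q \<sigma> W)"

definition val_pr_strat ::
  "('e::finite \<Rightarrow> 'q \<Rightarrow> 'a \<Rightarrow> 'q pmf) \<Rightarrow> 'q \<Rightarrow> 'e pmf \<Rightarrow> ('q, 'a) strat \<Rightarrow> 'q stream set \<Rightarrow> real" where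
  "val_pr_strat \<delta> q b \<sigma> W = (\<Sum>e\<in>UNIV. pmf b e * prob_obj (\<delta> e) \<sigma> q W)"

definition val_pr ::
  "('e::finite \<Rightarrow> 'q \<Rightarrow> 'a \<Rightarrow> 'q pmf) \<Rightarrow> 'q \<Rightarrow> 'e pmf \<Rightarrow> 'q stream set \<Rightarrow> real" where
  "val_pr \<delta> q b W = (SUP \<sigma>. val_pr_strat \<delta> q b \<sigma> W)"

end

theory Submission
  imports Defs
begin

text \<open>Fix a strategy and let \<open>p e\<close> be the probability of winning in environment \<open>e\<close>; let
  \<open>c > 0\<close> be the least prior weight. As all \<open>p e \<le> 1\<close>, the weighted average satisfies
  \<open>min p \<le> avg p \<le> 1\<close> and \<open>1 - avg p \<ge> c * (1 - min p)\<close>, since the worst environment alone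
  contributes that much to the shortfall of the average. Both inequalities survive suprema over
  strategies, so either value is 1 iff the other is.

  The only probabilistic input is \<open>p e \<le> 1\<close>, i.e. that the run measure, specified as the unique
  probability measure with the given cylinder probabilities, exists and is unique. It exists as
  the image of a product of independent choices, one action and successor state for every finite
  history, and it is unique because the prefix sets generating the stream space are finite
  disjoint unions of cylinders.\<close>

lemma eq_1_iff_eq_1_of_shortfall_bound:
  fixes x y c :: real
  assumes "x \<le> y" "y \<le> 1" "0 < c" "c * (1 - x) \<le> 1 - y"
  shows "x = 1 \<longleftrightarrow> y = 1"
proof
  assume "y = 1"
  then have "c * (1 - x) \<le> 0" using assms(4) by simp
  then show "x = 1" using assms(1,2,3) by (simp add: mult_le_0_iff)
qed (use assms(1,2) in simp)

lemma weighted_sum_le_1: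
  fixes w p :: "'e::finite \<Rightarrow> real"
  assumes "\<And>e. 0 \<le> w e" "sum w UNIV = 1" "\<And>e. p e \<le> 1"
  shows "(\<Sum>e\<in>UNIV. w e * p e) \<le> 1"
proof -
  have "(\<Sum>e\<in>UNIV. w e * p e) \<le> (\<Sum>e\<in>UNIV. w e)"
    by (intro sum_mono) (simp add: assms mult_left_le)
  then show ?thesis using assms(2) by simp
qed

lemma Min_le_weighted_sum:
  fixes w p :: "'e::finite \<Rightarrow> real"
  assumes "\<And>e. 0 \<le> w e" "sum w UNIV = 1"
  shows "Min (range p) \<le> (\<Sum>e\<in>UNIV. w e * p e)"
proof -
  have "Min (range p) = (\<Sum>e\<in>UNIV. w e * Min (range p))"
    by (simp add: assms(2) sum_distrib_right[symmetric])
  also have "\<dots> \<le> (\<Sum>e\<in>UNIV. w e * p e)"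
    by (intro sum_mono mult_left_mono) (simp_all add: assms(1))
  finally show ?thesis .
qed

lemma Min_weight_mult_shortfall_le:
  fixes w p :: "'e::finite \<Rightarrow> real"
  assumes "\<And>e. 0 \<le> w e" "sum w UNIV = 1" "\<And>e. p e \<le> 1"
  shows "Min (range w) * (1 - Min (range p)) \<le> 1 - (\<Sum>e\<in>UNIV. w e * p e)"
proof -
  have "Min (range p) \<in> range p" by (rule Min_in) simp_all
  then obtain e where e: "Min (range p) = p e" by blast
  have "Min (range w) * (1 - p e) \<le> w e * (1 - p e)"
    by (intro mult_right_mono) (simp_all add: assms(3))
  also have "\<dots> \<le> (\<Sum>e'\<in>UNIV. w e' * (1 - p e'))"
    by (rule member_le_sum) (simp_all add: assms(1,3))
  also have "\<dots> = 1 - (\<Sum>e\<in>UNIV. w e * p e)"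
    by (simp add: assms(2) right_diff_distrib sum_subtractf)
  finally show ?thesis by (simp add: e)
qed

lemma Min_eq_1_iff_weighted_sum_eq_1:
  fixes w p :: "'e::finite \<Rightarrow> real"
  assumes "\<And>e. 0 < w e" "sum w UNIV = 1" "\<And>e. p e \<le> 1"
  shows "Min (range p) = 1 \<longleftrightarrow> (\<Sum>e\<in>UNIV. w e * p e) = 1"
proof (rule eq_1_iff_eq_1_of_shortfall_bound)
  have w_nonneg: "\<And>e. 0 \<le> w e" by (simp add: assms(1) less_imp_le)
  show "Min (range p) \<le> (\<Sum>e\<in>UNIV. w e * p e)"
    by (rule Min_le_weighted_sum) (simp_all add: w_nonneg assms(2))
  show "(\<Sum>e\<in>UNIV. w e * p e) \<le> 1"
    by (rule weighted_sum_le_1) (simp_all add: w_nonneg assms(2,3))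
  show "0 < Min (range w)" by (simp add: assms(1))
  show "Min (range w) * (1 - Min (range p)) \<le> 1 - (\<Sum>e\<in>UNIV. w e * p e)"
    by (rule Min_weight_mult_shortfall_le) (simp_all add: w_nonneg assms(2,3))
qed

lemma SUP_Min_eq_1_iff_SUP_weighted_sum_eq_1:
  fixes w :: "'e::finite \<Rightarrow> real" and P :: "'e \<Rightarrow> 's \<Rightarrow> real"
  assumes "\<And>e. 0 < w e" "sum w UNIV = 1" "\<And>e s. P e s \<le> 1"
  shows "(SUP s. Min (range (\<lambda>e. P e s))) = 1 \<longleftrightarrow> (SUP s. \<Sum>e\<in>UNIV. w e * P e s) = 1"
proof -
  define m where "m s = Min (range (\<lambda>e. P e s))" for s
  define a where "a s = (\<Sum>e\<in>UNIV. w e * P e s)" for s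
  have w_nonneg: "\<And>e. 0 \<le> w e" by (simp add: assms(1) less_imp_le)
  have m_le_1: "m s \<le> 1" for s by (simp add: m_def assms(3) Min_le_iff)
  have a_le_1: "a s \<le> 1" for s
    unfolding a_def by (rule weighted_sum_le_1) (simp_all add: w_nonneg assms)
  have m_le_a: "m s \<le> a s" for s
    unfolding m_def a_def by (rule Min_le_weighted_sum) (simp_all add: w_nonneg assms)
  have shortfall: "Min (range w) * (1 - m s) \<le> 1 - a s" for s
    unfolding m_def a_def by (rule Min_weight_mult_shortfall_le) (simp_all add: w_nonneg assms)
  show ?thesis
    unfolding m_def[symmetric] a_def[symmetric]
  proof (rule eq_1_iff_eq_1_of_shortfall_bound)
    show "(SUP s. m s) \<le> (SUP s. a s)"
      using m_le_a a_le_1 by (intro cSUP_mono bdd_aboveI[of _ 1]) auto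
    show "(SUP s. a s) \<le> 1" by (rule cSUP_least) (simp_all add: a_le_1)
    show "0 < Min (range w)" by (simp add: assms(1))
    have "Min (range w) * (1 - (SUP s. m s)) \<le> 1 - a s" for s
    proof -
      have "m s \<le> (SUP s. m s)" using m_le_1 by (intro cSUP_upper bdd_aboveI[of _ 1]) auto
      then have "Min (range w) * (1 - (SUP s. m s)) \<le> Min (range w) * (1 - m s)"
        by (intro mult_left_mono) (simp_all add: w_nonneg)
      then show ?thesis using shortfall[of s] by linarith
    qed
    then have "(SUP s. a s) \<le> 1 - Min (range w) * (1 - (SUP s. m s))"
      by (intro cSUP_least) (auto simp: algebra_simps)
    then show "Min (range w) * (1 - (SUP s. m s)) \<le> 1 - (SUP s. a s)" by simp
  qed
qed

definition run_prefix :: "('q \<times> 'a) stream \<Rightarrow> nat \<Rightarrow> ('q, 'a) frun" where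
  "run_prefix s n = (fst (shd s), map (\<lambda>i. (snd (s !! i), fst (s !! Suc i))) [0..<n])"

lemma run_prefix_Suc:
  "run_prefix s (Suc n) =
     (fst (run_prefix s n), snd (run_prefix s n) @ [(snd (s !! n), fst (s !! Suc n))])"
  by (simp add: run_prefix_def)

lemma run_prefix_eq_iff:
  "run_prefix s n = r \<longleftrightarrow> length (snd r) = n \<and>
     (\<forall>i<Suc n. fst (s !! i) = run_states r ! i) \<and> (\<forall>i<n. snd (s !! i) = fst (snd r ! i))"
proof -
  obtain q0 xs where r: "r = (q0, xs)" by fastforce
  show ?thesis
    by (auto simp: r run_prefix_def run_states_def list_eq_iff_nth_eq All_less_Suc2 prod_eq_iff)
qed

lemma last_run_states: "last (run_states r) = run_states r ! length (snd r)"
  by (simp add: run_states_def last_conv_nth)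

lemma last_run_states_take:
  "i \<le> length xs \<Longrightarrow> last (run_states (q, take i xs)) = run_states (q, xs) ! i"
  by (cases i) (auto simp: run_states_def last_map take_Suc_conv_app_nth)

lemma mem_cylinder_iff: "s \<in> cylinder r \<longleftrightarrow> run_prefix s (length (snd r)) = r"
  unfolding run_prefix_eq_iff cylinder_def last_run_states by (auto simp: All_less_Suc prod_eq_iff)

lemma mem_cylinder_run_prefix_iff:
  "s \<in> cylinder (run_prefix t n) \<longleftrightarrow> (\<forall>i<n. s !! i = t !! i) \<and> fst (s !! n) = fst (t !! n)"
proof -
  have "length (snd (run_prefix t n)) = n"
    "\<forall>i<Suc n. fst (t !! i) = run_states (run_prefix t n) ! i"
    "\<forall>i<n. snd (t !! i) = fst (snd (run_prefix t n) ! i)"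
    using run_prefix_eq_iff[of t n "run_prefix t n"] by simp_all
  then show ?thesis
    unfolding mem_cylinder_iff run_prefix_eq_iff by (auto simp: All_less_Suc prod_eq_iff)
qed

lemma sstart_UNIV_eq_UN_cylinder:
  "sstart UNIV xs = (\<Union>q'. cylinder (run_prefix (xs @- sconst (q', a)) (length xs)))"
  by (auto simp: sstart_eq streams_UNIV mem_cylinder_run_prefix_iff)

lemma cylinder_in_sets:
  "cylinder (r :: ('q::countable, 'a::countable) frun) \<in> sets (stream_space (count_space UNIV))"
proof -
  define n where "n = length (snd r)"
  define T where "T = {l :: ('q \<times> 'a) list. (\<forall>i<n. l ! i = (run_states r ! i, fst (snd r ! i)))
     \<and> fst (l ! n) = last (run_states r)}"
  have "cylinder r = stake (Suc n) -` T \<inter> space (stream_space (count_space UNIV))"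
    using stake_nth[of _ "Suc n"]
    by (auto simp: cylinder_def space_stream_space T_def n_def[symmetric] simp del: stake.simps)
  also have "\<dots> \<in> sets (stream_space (count_space UNIV))"
    by (rule measurable_sets[OF measurable_stake]) simp
  finally show ?thesis .
qed

lemma stream_measure_eqI_cylinder:
  fixes M N :: "('q::finite \<times> 'a::finite) stream measure"
  assumes "prob_space M" "prob_space N"
    and sets_M: "sets M = sets (stream_space (count_space UNIV))"
    and sets_N: "sets N = sets (stream_space (count_space UNIV))"
    and cylinder_eq: "\<And>r. measure M (cylinder r) = measure N (cylinder r)"
  shows "M = N"
proof (rule stream_space_eq_sstart[where S = UNIV, OF _ assms(1,2) _ _ sets_M sets_N])
  interpret M: prob_space M by fact
  interpret N: prob_space N by fact
  fix xs :: "('q \<times> 'a) list"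
  define C where "C q' = cylinder (run_prefix (xs @- sconst (q', undefined)) (length xs))" for q'
  have sstart: "sstart UNIV xs = (\<Union>q'. C q')"
    unfolding C_def by (rule sstart_UNIV_eq_UN_cylinder)
  have disj: "disjoint_family C"
    by (auto simp: disjoint_family_on_def C_def mem_cylinder_run_prefix_iff)
  have sets_C: "C q' \<in> sets (stream_space (count_space UNIV))" for q'
    by (simp add: C_def cylinder_in_sets)
  have "measure M (sstart UNIV xs) = (\<Sum>q'\<in>UNIV. measure M (C q'))"
    unfolding sstart by (intro M.finite_measure_finite_Union) (auto simp: disj sets_M sets_C)
  also have "\<dots> = (\<Sum>q'\<in>UNIV. measure N (C q'))"
    by (simp add: C_def cylinder_eq)
  also have "\<dots> = measure N (sstart UNIV xs)"
    unfolding sstart by (intro N.finite_measure_finite_Union[symmetric]) (auto simp: disj sets_N sets_C)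
  finally show "emeasure M (sstart UNIV xs) = emeasure N (sstart UNIV xs)"
    by (simp add: M.emeasure_eq_measure N.emeasure_eq_measure)
qed simp_all

definition extend_run :: "(('q, 'a) frun \<Rightarrow> 'a \<times> 'q) \<Rightarrow> ('q, 'a) frun \<Rightarrow> ('q, 'a) frun" where
  "extend_run \<omega> h = (fst h, snd h @ [\<omega> h])"

definition choice_history :: "(('q, 'a) frun \<Rightarrow> 'a \<times> 'q) \<Rightarrow> 'q \<Rightarrow> nat \<Rightarrow> ('q, 'a) frun" where
  "choice_history \<omega> q n = (extend_run \<omega> ^^ n) (q, [])"

definition run_of_choices :: "'q \<Rightarrow> (('q, 'a) frun \<Rightarrow> 'a \<times> 'q) \<Rightarrow> ('q \<times> 'a) stream" where
  "run_of_choices q \<omega> =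
     smap (\<lambda>h. (last (run_states h), fst (\<omega> h))) (siterate (extend_run \<omega>) (q, []))"

lemma choice_history_0: "choice_history \<omega> q 0 = (q, [])"
  by (simp add: choice_history_def)

lemma choice_history_Suc: "choice_history \<omega> q (Suc n) = extend_run \<omega> (choice_history \<omega> q n)"
  by (simp add: choice_history_def)

lemma choice_history_eq_iff:
  "choice_history \<omega> q n = (q', xs) \<longleftrightarrow>
     q' = q \<and> length xs = n \<and> (\<forall>i<n. \<omega> (q, take i xs) = xs ! i)"
proof (induction n arbitrary: xs)
  case 0
  then show ?case by (auto simp: choice_history_0)
next
  case (Suc n)
  show ?case
  proof (cases xs rule: rev_cases)
    case Nil
    then show ?thesis by (simp add: choice_history_Suc extend_run_def prod_eq_iff)
  next
    case (snoc ys y)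
    have "choice_history \<omega> q (Suc n) = (q', xs) \<longleftrightarrow>
        choice_history \<omega> q n = (q', ys) \<and> \<omega> (q', ys) = y"
      by (cases "choice_history \<omega> q n") (auto simp: choice_history_Suc extend_run_def snoc)
    also have "\<dots> \<longleftrightarrow>
        q' = q \<and> length ys = n \<and> (\<forall>i<n. \<omega> (q, take i ys) = ys ! i) \<and> \<omega> (q, ys) = y"
      using Suc.IH by auto
    also have "\<dots> \<longleftrightarrow> q' = q \<and> length xs = Suc n \<and> (\<forall>i<Suc n. \<omega> (q, take i xs) = xs ! i)"
      by (auto simp: snoc less_Suc_eq nth_append)
    finally show ?thesis .
  qed
qed

lemma snth_run_of_choices:
  "run_of_choices q \<omega> !! n =
     (last (run_states (choice_history \<omega> q n)), fst (\<omega> (choice_history \<omega> q n)))"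
  by (simp add: run_of_choices_def choice_history_def snth_siterate)

lemma run_prefix_run_of_choices: "run_prefix (run_of_choices q \<omega>) n = choice_history \<omega> q n"
proof (induction n)
  case 0
  show ?case
    using snth_run_of_choices[of q \<omega> 0] by (simp add: run_prefix_def choice_history_0 run_states_def)
next
  case (Suc n)
  have "fst (run_of_choices q \<omega> !! Suc n) = snd (\<omega> (choice_history \<omega> q n))"
    unfolding snth_run_of_choices by (simp add: choice_history_Suc extend_run_def run_states_def)
  then show ?case
    using Suc.IH
    by (simp add: run_prefix_Suc choice_history_Suc extend_run_def snth_run_of_choices del: snth.simps)
qed

lemma run_of_choices_mem_cylinder_iff:
  "run_of_choices q \<omega> \<in> cylinder r \<longleftrightarrow>
     fst r = q \<and> (\<forall>i<length (snd r). \<omega> (q, take i (snd r)) = snd r ! i)"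
  using choice_history_eq_iff[of \<omega> q "length (snd r)" "fst r" "snd r"]
  by (simp add: mem_cylinder_iff run_prefix_run_of_choices)

lemma measure_PiM_pmf_fixed_coordinates:
  fixes K :: "'i \<Rightarrow> 'b pmf"
  assumes "finite J"
  shows "measure (PiM UNIV (\<lambda>i. measure_pmf (K i)))
      {\<omega> \<in> space (PiM UNIV (\<lambda>i. measure_pmf (K i))). \<forall>j\<in>J. \<omega> j = x j} =
    (\<Prod>j\<in>J. pmf (K j) (x j))"
proof -
  interpret product_prob_space "\<lambda>i. measure_pmf (K i)" UNIV by standard
  have "{\<omega> \<in> space (PiM UNIV (\<lambda>i. measure_pmf (K i))). \<forall>j\<in>J. \<omega> j = x j} =
      prod_emb UNIV (\<lambda>i. measure_pmf (K i)) J (Pi\<^sub>E J (\<lambda>j. {x j}))"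
    by (auto simp: prod_emb_def space_PiM PiE_iff)
  moreover have "emeasure (PiM UNIV (\<lambda>i. measure_pmf (K i)))
      (prod_emb UNIV (\<lambda>i. measure_pmf (K i)) J (Pi\<^sub>E J (\<lambda>j. {x j}))) =
    (\<Prod>j\<in>J. emeasure (measure_pmf (K j)) {x j})"
    using assms by (intro emeasure_PiM_emb) auto
  ultimately show ?thesis
    by (simp add: measure_def emeasure_pmf_single prod_ennreal prod_nonneg)
qed

definition choice_space ::
  "(('q, 'a) frun \<Rightarrow> ('a \<times> 'q) pmf) \<Rightarrow> (('q, 'a) frun \<Rightarrow> 'a \<times> 'q) measure" where
  "choice_space K = PiM UNIV (\<lambda>h. measure_pmf (K h))"

definition choice_run_measure ::
  "(('q, 'a) frun \<Rightarrow> ('a \<times> 'q) pmf) \<Rightarrow> 'q \<Rightarrow> ('q \<times> 'a) stream measure" where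
  "choice_run_measure K q =
     distr (choice_space K) (stream_space (count_space UNIV)) (run_of_choices q)"

lemma prob_space_choice_space: "prob_space (choice_space K)"
proof -
  interpret product_prob_space "\<lambda>h. measure_pmf (K h)" UNIV by standard
  show ?thesis unfolding choice_space_def by (rule prob_space_axioms)
qed

lemma measurable_choice_coordinate: "(\<lambda>\<omega>. \<omega> h) \<in> choice_space K \<rightarrow>\<^sub>M count_space UNIV"
  unfolding choice_space_def
  using measurable_component_singleton[of h UNIV "\<lambda>h. measure_pmf (K h)"]
  by (simp add: measurable_cong_sets[OF refl sets_measure_pmf_count_space])

lemma measurable_choice_history:
  fixes K :: "('q::countable, 'a::countable) frun \<Rightarrow> ('a \<times> 'q) pmf"
  shows "(\<lambda>\<omega>. choice_history \<omega> q n) \<in> choice_space K \<rightarrow>\<^sub>M count_space UNIV"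
proof (induction n)
  case 0
  then show ?case by (simp add: choice_history_0)
next
  case (Suc n)
  have "(\<lambda>\<omega>. extend_run \<omega> h) \<in> choice_space K \<rightarrow>\<^sub>M count_space UNIV" for h
    unfolding extend_run_def by (rule measurable_compose[OF measurable_choice_coordinate]) simp
  then show ?case
    unfolding choice_history_Suc
    by (rule measurable_compose_countable'[where I = UNIV, OF _ Suc.IH]) simp_all
qed

lemma measurable_run_of_choices:
  fixes K :: "('q::countable, 'a::countable) frun \<Rightarrow> ('a \<times> 'q) pmf"
  shows "run_of_choices q \<in> choice_space K \<rightarrow>\<^sub>M stream_space (count_space UNIV)"
proof (rule measurable_stream_space2)
  fix n
  have "(\<lambda>\<omega>. (last (run_states h), fst (\<omega> h))) \<in> choice_space K \<rightarrow>\<^sub>M count_space UNIV" for h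
    by (rule measurable_compose[OF measurable_choice_coordinate]) simp
  then show "(\<lambda>\<omega>. run_of_choices q \<omega> !! n) \<in> choice_space K \<rightarrow>\<^sub>M count_space UNIV"
    unfolding snth_run_of_choices
    by (rule measurable_compose_countable'[where I = UNIV, OF _ measurable_choice_history]) simp_all
qed

lemma prob_space_choice_run_measure:
  fixes K :: "('q::countable, 'a::countable) frun \<Rightarrow> ('a \<times> 'q) pmf"
  shows "prob_space (choice_run_measure K q)"
  unfolding choice_run_measure_def
  by (rule prob_space.prob_space_distr[OF prob_space_choice_space measurable_run_of_choices])

lemma sets_choice_run_measure:
  "sets (choice_run_measure K q) = sets (stream_space (count_space UNIV))"
  by (simp add: choice_run_measure_def)

lemma measure_choice_run_measure_cylinder:
  fixes K :: "('q::countable, 'a::countable) frun \<Rightarrow> ('a \<times> 'q) pmf"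
  shows "measure (choice_run_measure K q) (cylinder r) =
    (if fst r = q then \<Prod>i<length (snd r). pmf (K (q, take i (snd r))) (snd r ! i) else 0)"
proof -
  obtain q0 xs where r: "r = (q0, xs)" by fastforce
  define h where "h i = (q, take i xs)" for i
  define J where "J = h ` {..<length xs}"
  have inj: "inj_on h {..<length xs}"
    by (rule inj_on_inverseI[where g = "\<lambda>h. length (snd h)"]) (simp add: h_def)
  have "measure (choice_run_measure K q) (cylinder r) =
      measure (choice_space K) (run_of_choices q -` cylinder r \<inter> space (choice_space K))"
    unfolding choice_run_measure_def
    by (rule measure_distr[OF measurable_run_of_choices cylinder_in_sets])
  also have "run_of_choices q -` cylinder r \<inter> space (choice_space K) = (if q0 = q then
      {\<omega> \<in> space (choice_space K). \<forall>j\<in>J. \<omega> j = xs ! length (snd j)} else {})"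
    by (auto simp: run_of_choices_mem_cylinder_iff r h_def J_def)
  also have "measure (choice_space K) \<dots> =
      (if q0 = q then \<Prod>j\<in>J. pmf (K j) (xs ! length (snd j)) else 0)"
    using finite_imageI[of "{..<length xs}" h]
    by (simp add: choice_space_def measure_PiM_pmf_fixed_coordinates J_def[symmetric])
  also have "\<dots> = (if fst r = q then \<Prod>i<length (snd r). pmf (K (q, take i (snd r))) (snd r ! i) else 0)"
    unfolding J_def prod.reindex[OF inj] by (simp add: r h_def)
  finally show ?thesis .
qed

definition step_pmf ::
  "('q \<Rightarrow> 'a \<Rightarrow> 'q pmf) \<Rightarrow> ('q, 'a) strat \<Rightarrow> ('q, 'a) frun \<Rightarrow> ('a \<times> 'q) pmf" where
  "step_pmf \<delta> \<sigma> h = bind_pmf (\<sigma> h) (\<lambda>a. map_pmf (Pair a) (\<delta> (last (run_states h)) a))"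

lemma pmf_map_pmf_Pair: "pmf (map_pmf (Pair a) p) (a', x) = (if a' = a then pmf p x else 0)"
  by (auto simp: pmf_map_inj' inj_on_def pmf_eq_0_set_pmf)

lemma pmf_step_pmf:
  "pmf (step_pmf \<delta> \<sigma> h) x = pmf (\<sigma> h) (fst x) * pmf (\<delta> (last (run_states h)) (fst x)) (snd x)"
proof (cases x)
  case (Pair a q')
  then show ?thesis
    unfolding Pair step_pmf_def pmf_bind pmf_map_pmf_Pair
    by (subst integral_measure_pmf_real[where A = "{a}"]) (auto split: if_splits)
qed

lemma measure_choice_run_measure_step_pmf_cylinder:
  fixes \<delta> :: "'q::countable \<Rightarrow> 'a::countable \<Rightarrow> 'q pmf"
  shows "measure (choice_run_measure (step_pmf \<delta> \<sigma>) q) (cylinder r) = cyl_prob \<delta> \<sigma> q r"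
  using last_run_states_take[of _ "snd r" "fst r"]
  by (auto simp: measure_choice_run_measure_cylinder cyl_prob_def pmf_step_pmf intro!: prod.cong)

lemma run_measure_eq_choice_run_measure:
  fixes \<delta> :: "'q::finite \<Rightarrow> 'a::finite \<Rightarrow> 'q pmf"
  shows "run_measure \<delta> \<sigma> q = choice_run_measure (step_pmf \<delta> \<sigma>) q"
  unfolding run_measure_def
proof (rule the_equality)
  show "sets (choice_run_measure (step_pmf \<delta> \<sigma>) q) = sets (stream_space (count_space UNIV)) \<and>
      prob_space (choice_run_measure (step_pmf \<delta> \<sigma>) q) \<and>
      (\<forall>r. measure (choice_run_measure (step_pmf \<delta> \<sigma>) q) (cylinder r) = cyl_prob \<delta> \<sigma> q r)"
    by (simp add: sets_choice_run_measure prob_space_choice_run_measure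
        measure_choice_run_measure_step_pmf_cylinder)
next
  fix M
  assume "sets M = sets (stream_space (count_space UNIV)) \<and> prob_space M \<and>
      (\<forall>r. measure M (cylinder r) = cyl_prob \<delta> \<sigma> q r)"
  then have "sets M = sets (stream_space (count_space UNIV))" "prob_space M"
    "\<And>r. measure M (cylinder r) = cyl_prob \<delta> \<sigma> q r"
    by blast+
  then show "M = choice_run_measure (step_pmf \<delta> \<sigma>) q"
    by (intro stream_measure_eqI_cylinder)
      (simp_all add: sets_choice_run_measure prob_space_choice_run_measure
        measure_choice_run_measure_step_pmf_cylinder)
qed

lemma prob_obj_le_1:
  fixes \<delta> :: "'q::finite \<Rightarrow> 'a::finite \<Rightarrow> 'q pmf"
  shows "prob_obj \<delta> \<sigma> q W \<le> 1"
proof -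
  interpret prob_space "run_measure \<delta> \<sigma> q"
    unfolding run_measure_eq_choice_run_measure by (rule prob_space_choice_run_measure)
  show ?thesis unfolding prob_obj_def by simp
qed

theorem mainTheorem1:
  fixes \<delta> :: "'e::finite \<Rightarrow> 'q::finite \<Rightarrow> 'a::finite \<Rightarrow> 'q pmf"
    and q :: 'q and f :: "'q \<Rightarrow> nat" and b :: "'e pmf"
  assumes "set_pmf b = UNIV"
  shows "(val_uni \<delta> q (parity f) = 1 \<longleftrightarrow> val_pr \<delta> q b (parity f) = 1)
       \<and> (\<forall>\<sigma> :: ('q, 'a) strat.
            val_uni_strat \<delta> q \<sigma> (parity f) = 1 \<longleftrightarrow> val_pr_strat \<delta> q b \<sigma> (parity f) = 1)"
proof -
  have weight_pos: "0 < pmf b e" for e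
    using assms by (simp add: pmf_positive)
  have weight_sum: "sum (pmf b) UNIV = 1"
    by (rule sum_pmf_eq_1) auto
  have win_le_1: "prob_obj (\<delta> e) \<sigma> q (parity f) \<le> 1" for e and \<sigma> :: "('q, 'a) strat"
    by (rule prob_obj_le_1)
  show ?thesis
    unfolding val_uni_def val_pr_def val_uni_strat_def val_pr_strat_def
    using SUP_Min_eq_1_iff_SUP_weighted_sum_eq_1[of "pmf b" "\<lambda>e \<sigma>. prob_obj (\<delta> e) \<sigma> q (parity f)",
        OF weight_pos weight_sum win_le_1]
      Min_eq_1_iff_weighted_sum_eq_1[of "pmf b" "\<lambda>e. prob_obj (\<delta> e) _ q (parity f)",
        OF weight_pos weight_sum win_le_1]
    by blast
qed

end
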